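(* Let $f(w)=\sum_{n=0}^{\infty}a_nw^n$ be an entire function of order $\rho$ with $0\le\rho<1$. Then for every $z\in\mathbb{C}-f^{-1}(f(0))$ and every $n\in\mathbb{Z}^+$, $$a_n=(-1)^n\big(f(0)-f(z)\big)\sum_{0\le i_1<i_2<\cdots<i_n}\Big(\prod_{j=1}^n\phi_{0i_j}(z)\Big)^{-1}.$$
   Context: ${\rm Aut}(f)=\{\phi_{0n}\}_n$ denotes the automorphic functions of $f$ (branches of $f^{-1}\circ f$, solutions of $f(\phi(z))=f(z)$); for fixed $z$, $\{\phi_{0n}(z)\}_{n\ge 0}$ is the set of zeros of $w\mapsto f(w)-f(z)$ listed with multiplicity (all nonzero when $f(z)\ne f(0)$). *)

theory Defs
  imports "HOL-Complex_Analysis.Complex_Analysis"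
begin

definition entire_order :: "(complex \<Rightarrow> complex) \<Rightarrow> ereal" where
  "entire_order f = Inf {ereal \<rho> | \<rho>. \<rho> \<ge> 0 \<and>
      (\<forall>\<^sub>F r in at_top. \<forall>w. norm w = r \<longrightarrow> norm (f w) \<le> exp (r powr \<rho>))}"

text \<open>phi (restricted to the index set I, an initial segment of nat) lists the
  zeros of w \<mapsto> f w - f z with multiplicity: these are the values
  phi_{0n}(z) of the automorphic functions of f at z.\<close>
definition zeros_enum ::
    "(complex \<Rightarrow> complex) \<Rightarrow> complex \<Rightarrow> nat set \<Rightarrow> (nat \<Rightarrow> complex) \<Rightarrow> bool" where
  "zeros_enum f z I \<phi> \<longleftrightarrow>
     (I = UNIV \<or> (\<exists>N. I = {..<N})) \<and>
     (\<forall>w. finite {k\<in>I. \<phi> k = w} \<and>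
          card {k\<in>I. \<phi> k = w} =
            (if f w = f z then nat (zorder (\<lambda>u. f u - f z) w) else 0))"

end

theory Submission
  imports Defs
begin

text \<open>
  Let \<open>g = f - f z\<close>; then \<open>g 0 \<noteq> 0\<close> and the \<open>\<phi> k\<close> are the zeros of \<open>g\<close>. Dividing out the
  zeros in a disc and applying the maximum modulus principle shows that, for some \<open>\<sigma> < 1\<close>,
  \<open>g\<close> has \<open>O(r powr \<sigma>)\<close> zeros of modulus at most \<open>r\<close>; hence \<open>\<Sum>k. 1 / norm (\<phi> k)\<close> converges.
  Write \<open>g = G\<^sub>N * (\<Prod>k<N. 1 - w / \<phi> k)\<close>. Since the tail of that series is small and
  \<open>G\<^sub>N\<close> has no zeros on a large disc, a Borel-Caratheodory estimate for \<open>log G\<^sub>N\<close> shows that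
  \<open>G\<^sub>N \<longrightarrow> g 0\<close> uniformly on the unit disc: order \<open>< 1\<close> leaves no exponential factor.
  By Cauchy's inequality the Taylor coefficients of \<open>G\<^sub>N\<close> of positive index tend to \<open>0\<close>, so
  the \<open>n\<close>-th coefficient of \<open>g\<close> is the limit of \<open>g 0\<close> times the \<open>n\<close>-th coefficient of the
  product, namely \<open>(-1) ^ n\<close> times the elementary symmetric function of the \<open>1 / \<phi> k\<close>.
\<close>

section \<open>Dividing out zeros of entire functions\<close>

lemma entire_zorder_pos_iff:
  fixes g :: "complex \<Rightarrow> complex"
  assumes hol: "g holomorphic_on UNIV" and "g q \<noteq> 0"
  shows "zorder g p > 0 \<longleftrightarrow> g p = 0"
proof
  assume "zorder g p > 0"
  then show "g p = 0"
    using zorder_eq_0I[of g p] hol analytic_on_holomorphic by fastforce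
next
  assume "g p = 0"
  moreover have "\<exists>\<^sub>F w in at p. g w \<noteq> 0"
    using non_zero_neighbour_alt[OF hol open_UNIV connected_UNIV, of p q] assms(2)
    by (auto elim: eventually_mono intro: eventually_frequently)
  ultimately show "zorder g p > 0"
    using zorder_pos_iff[OF hol open_UNIV] by blast
qed

lemma zero_if_card_le_zorder:
  fixes g :: "complex \<Rightarrow> complex" and b :: "'i \<Rightarrow> complex"
  assumes "g holomorphic_on UNIV" "g 0 \<noteq> 0" "finite K"
    and "\<And>p. int (card {k\<in>K. b k = p}) \<le> zorder g p" and "k \<in> K"
  shows "g (b k) = 0"
proof -
  have "card {j\<in>K. b j = b k} > 0"
    using assms(3,5) by (auto simp: card_gt_0_iff)
  then have "zorder g (b k) > 0"
    using assms(4)[of "b k"] by linarith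
  then show ?thesis
    using entire_zorder_pos_iff[OF assms(1,2)] by blast
qed

lemma entire_divide_zero:
  fixes g :: "complex \<Rightarrow> complex"
  assumes hol: "g holomorphic_on UNIV" and ga: "g a = 0" and g0: "g 0 \<noteq> 0"
  obtains G where "G holomorphic_on UNIV" "\<And>w. g w = (1 - w / a) * G w" "G 0 = g 0"
    "\<And>p. zorder G p = zorder g p - (if p = a then 1 else 0)"
proof -
  have a: "a \<noteq> 0"
    using ga g0 by auto
  define G where "G = (\<lambda>w. - a * (if w = a then deriv g a else (g w - g a) / (w - a)))"
  have holG: "G holomorphic_on UNIV"
    unfolding G_def by (intro holomorphic_intros pole_lemma[OF hol]) auto
  have g_eq: "g w = (1 - w / a) * G w" for w
    using a ga by (cases "w = a") (simp_all add: G_def field_simps)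
  have G0: "G 0 = g 0"
    using a ga by (simp add: G_def field_simps)
  have zorder_factor: "zorder (\<lambda>w. 1 - w / a) p = (if p = a then 1 else 0)" for p
  proof (cases "p = a")
    case True
    have "zorder (\<lambda>w. 1 - w / a) a = 1"
      by (rule zorder_eqI[where S=UNIV and g="\<lambda>_. - 1 / a"]) (use a in \<open>auto simp: field_simps\<close>)
    then show ?thesis
      using True by simp
  next
    case False
    have "zorder (\<lambda>w. 1 - w / a) p = 0"
      by (rule zorder_eq_0I) (use False a in \<open>auto intro!: analytic_intros simp: field_simps\<close>)
    then show ?thesis
      using False by simp
  qed
  have "zorder G p = zorder g p - (if p = a then 1 else 0)" for p
  proof -
    have "\<forall>\<^sub>F w in at p. g w \<noteq> 0"
      using non_zero_neighbour_alt[OF hol open_UNIV connected_UNIV, of p 0] g0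
      by (auto elim: eventually_mono)
    moreover have "(\<lambda>w. 1 - w / a) analytic_on {p}"
      using a by (intro analytic_intros) auto
    moreover have "G analytic_on {p}"
      using holG analytic_on_holomorphic by blast
    ultimately have "zorder (\<lambda>w. (1 - w / a) * G w) p = zorder (\<lambda>w. 1 - w / a) p + zorder G p"
      using g_eq by (intro zorder_times_analytic) (auto elim: eventually_mono)
    moreover have "(\<lambda>w. (1 - w / a) * G w) = g"
      using g_eq by auto
    ultimately show ?thesis
      using zorder_factor[of p] by simp
  qed
  then show ?thesis
    using that holG g_eq G0 by blast
qed

lemma entire_divide_zeros:
  fixes g :: "complex \<Rightarrow> complex" and b :: "'i \<Rightarrow> complex"
  assumes "finite K" "g holomorphic_on UNIV" "g 0 \<noteq> 0"
    and "\<And>p. int (card {k\<in>K. b k = p}) \<le> zorder g p"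
  obtains H where "H holomorphic_on UNIV" "\<And>w. g w = H w * (\<Prod>k\<in>K. 1 - w / b k)" "H 0 = g 0"
    "\<And>p. zorder H p = zorder g p - int (card {k\<in>K. b k = p})"
proof -
  have "\<exists>H. H holomorphic_on UNIV \<and> (\<forall>w. g w = H w * (\<Prod>k\<in>K. 1 - w / b k)) \<and> H 0 = g 0 \<and>
      (\<forall>p. zorder H p = zorder g p - int (card {k\<in>K. b k = p}))"
    using assms
  proof (induction K arbitrary: g rule: finite_induct)
    case empty
    then show ?case by auto
  next
    case (insert j K)
    have count: "card {k\<in>insert j K. b k = p} = card {k\<in>K. b k = p} + (if b j = p then 1 else 0)" for p
    proof -
      have "{k\<in>insert j K. b k = p} = (if b j = p then insert j {k\<in>K. b k = p} else {k\<in>K. b k = p})"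
        by auto
      then show ?thesis
        using insert.hyps by simp
    qed
    have "g (b j) = 0"
      using zero_if_card_le_zorder[OF insert.prems(1,2) _ insert.prems(3)] insert.hyps by simp
    then obtain G where G: "G holomorphic_on UNIV" "\<And>w. g w = (1 - w / b j) * G w" "G 0 = g 0"
        "\<And>p. zorder G p = zorder g p - (if p = b j then 1 else 0)"
      using entire_divide_zero[OF insert.prems(1) _ insert.prems(2)] by blast
    have "int (card {k\<in>K. b k = p}) \<le> zorder G p" for p
      using insert.prems(3)[of p] count[of p] G(4)[of p] by (auto split: if_splits)
    then obtain H where H: "H holomorphic_on UNIV" "\<forall>w. G w = H w * (\<Prod>k\<in>K. 1 - w / b k)"
        "H 0 = G 0" "\<forall>p. zorder H p = zorder G p - int (card {k\<in>K. b k = p})"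
      using insert.IH[OF G(1)] G(3) insert.prems(2) by auto
    have "g = (\<lambda>w. H w * (\<Prod>k\<in>insert j K. 1 - w / b k))"
      using G(2) H(2) insert.hyps by (simp add: fun_eq_iff mult_ac)
    moreover have "zorder H p = zorder g p - int (card {k\<in>insert j K. b k = p})" for p
      using H(4) G(4) count[of p] by auto
    ultimately show ?case
      using H(1,3) G(3) by (intro exI[of _ H]) auto
  qed
  then show ?thesis
    using that by blast
qed

section \<open>Estimates on discs\<close>

lemma entire_norm_le_of_circle:
  fixes h :: "complex \<Rightarrow> complex"
  assumes "h holomorphic_on UNIV" "r > 0" "\<And>w. norm w = r \<Longrightarrow> norm (h w) \<le> B" "norm w \<le> r"
  shows "norm (h w) \<le> B"
proof (rule maximum_modulus_frontier[of h "cball 0 r"])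
  show "h holomorphic_on interior (cball 0 r)"
    using assms(1) by (auto intro: holomorphic_on_subset)
  show "continuous_on (closure (cball 0 r)) h"
    using assms(1) holomorphic_on_imp_continuous_on continuous_on_subset by blast
qed (use assms in auto)

lemma norm_prod_one_minus_divide_ge:
  fixes b :: "'i \<Rightarrow> complex"
  assumes "\<And>k. k \<in> K \<Longrightarrow> b k \<noteq> 0 \<and> (1 + t) * norm (b k) \<le> norm w" and "t \<ge> 0"
  shows "t ^ card K \<le> norm (\<Prod>k\<in>K. 1 - w / b k)"
proof -
  have "t \<le> norm (1 - w / b k)" if "k \<in> K" for k
  proof -
    have "1 + t \<le> norm (w / b k)"
      using assms(1)[OF that] by (simp add: norm_divide field_simps)
    moreover have "norm (w / b k) - 1 \<le> norm (1 - w / b k)"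
      using norm_triangle_ineq2[of "w / b k" 1] by (simp add: norm_minus_commute)
    ultimately show ?thesis by linarith
  qed
  then have "(\<Prod>k\<in>K. t) \<le> (\<Prod>k\<in>K. norm (1 - w / b k))"
    using assms(2) by (intro prod_mono) auto
  then show ?thesis
    by (simp add: prod_norm)
qed

lemma exp_neg_two_mul_le_one_minus:
  fixes x :: real
  assumes "0 \<le> x" "x \<le> 1/2"
  shows "exp (- 2 * x) \<le> 1 - x"
proof -
  have "exp (- 2 * x) \<le> 1 / (1 + 2 * x)"
    using exp_ge_add_one_self[of "2 * x"] assms by (simp add: exp_minus field_simps)
  also have "\<dots> \<le> 1 - x"
    using assms mult_left_mono[of "x * 2" 1 x] by (simp add: field_simps)
  finally show ?thesis .
qed

lemma norm_prod_one_minus_divide_ge_exp: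
  fixes b :: "'i \<Rightarrow> complex"
  assumes "finite K" "\<And>k. k \<in> K \<Longrightarrow> 2 * norm w \<le> norm (b k)"
  shows "exp (- 2 * norm w * (\<Sum>k\<in>K. norm (inverse (b k)))) \<le> norm (\<Prod>k\<in>K. 1 - w / b k)"
proof -
  define x where "x k = norm w * norm (inverse (b k))" for k
  have x: "0 \<le> x k" "x k \<le> 1/2" "1 - x k \<le> norm (1 - w / b k)" if "k \<in> K" for k
  proof -
    show "0 \<le> x k"
      by (simp add: x_def)
    show "x k \<le> 1/2"
      using assms(2)[OF that] by (cases "b k = 0") (auto simp: x_def norm_inverse divide_le_eq simp flip: divide_inverse)
    show "1 - x k \<le> norm (1 - w / b k)"
      using norm_triangle_ineq2[of 1 "w / b k"] by (simp add: x_def norm_mult divide_inverse)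
  qed
  have "exp (- 2 * norm w * (\<Sum>k\<in>K. norm (inverse (b k)))) = (\<Prod>k\<in>K. exp (- 2 * x k))"
    using assms(1) by (simp add: x_def exp_sum[symmetric] sum_distrib_left mult.assoc)
  also have "\<dots> \<le> (\<Prod>k\<in>K. norm (1 - w / b k))"
  proof (intro prod_mono conjI)
    fix k assume "k \<in> K"
    then show "exp (- 2 * x k) \<le> norm (1 - w / b k)"
      using x[of k] exp_neg_two_mul_le_one_minus[of "x k"] by linarith
  qed auto
  finally show ?thesis
    by (simp add: prod_norm)
qed

lemma norm_le_norm_reflect:
  fixes x :: complex
  assumes "Re x \<le> A" "A > 0"
  shows "norm x \<le> norm (2 * of_real A - x)"
proof -
  have "norm x ^ 2 \<le> norm (2 * of_real A - x) ^ 2"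
    unfolding cmod_power2 using assms by (simp add: power2_eq_square algebra_simps)
  then show ?thesis
    by (rule power2_le_imp_le) simp
qed

lemma norm_le_of_zero_at_center:
  fixes \<psi> :: "complex \<Rightarrow> complex"
  assumes hol: "\<psi> holomorphic_on ball 0 R" and R: "R \<ge> 2" and \<psi>0: "\<psi> 0 = 0"
    and le_1: "\<And>u. u \<in> ball 0 R \<Longrightarrow> norm (\<psi> u) \<le> 1" and w: "norm w \<le> 1"
  shows "norm (\<psi> w) \<le> 2 / R"
proof -
  define \<xi> where "\<xi> = (\<lambda>u. if u = 0 then deriv \<psi> 0 else (\<psi> u - \<psi> 0) / (u - 0))"
  have hol\<xi>: "\<xi> holomorphic_on ball 0 R"
    unfolding \<xi>_def by (rule pole_lemma[OF hol]) (use R in auto)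
  have \<xi>_le: "norm (\<xi> w) \<le> 2 / R"
  proof (rule maximum_modulus_frontier[of \<xi> "cball 0 (R/2)"])
    have sub: "cball 0 (R/2) \<subseteq> ball 0 R"
      using R by auto
    show "\<xi> holomorphic_on interior (cball 0 (R / 2))"
      by (rule holomorphic_on_subset[OF hol\<xi>]) (use R in auto)
    show "continuous_on (closure (cball 0 (R / 2))) \<xi>"
      using hol\<xi> sub holomorphic_on_imp_continuous_on continuous_on_subset by (metis closed_cball closure_closed)
    show "norm (\<xi> u) \<le> 2 / R" if "u \<in> frontier (cball 0 (R / 2))" for u
    proof -
      have u: "norm u = R / 2" "u \<in> ball 0 R"
        using that R by auto
      then have "norm (\<xi> u) = norm (\<psi> u) / (R / 2)"
        using R by (auto simp: \<xi>_def \<psi>0 norm_divide)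
      also have "\<dots> \<le> 1 / (R / 2)"
        using le_1[OF u(2)] R by (intro divide_right_mono) auto
      finally show ?thesis by simp
    qed
  qed (use w R in auto)
  show ?thesis
  proof (cases "w = 0")
    case False
    then have "norm (\<psi> w) = norm w * norm (\<xi> w)"
      by (simp add: \<xi>_def \<psi>0 norm_divide)
    also have "\<dots> \<le> 1 * (2 / R)"
      using w \<xi>_le by (intro mult_mono) auto
    finally show ?thesis by simp
  qed (use \<psi>0 R in simp)
qed

lemma Borel_Caratheodory_bound:
  fixes L :: "complex \<Rightarrow> complex"
  assumes hol: "L holomorphic_on ball 0 R" and R: "R \<ge> 4" and L0: "L 0 = 0" and A: "A > 0"
    and re: "\<And>w. w \<in> ball 0 R \<Longrightarrow> Re (L w) \<le> A" and w: "norm w \<le> 1"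
  shows "norm (L w) \<le> 8 * A / R"
proof -
  have den: "2 * of_real A - L u \<noteq> 0" if "u \<in> ball 0 R" for u
    using re[OF that] A by (auto simp: complex_eq_iff)
  \<comment> \<open>the Cayley-type transform \<open>\<psi>\<close> maps the half plane \<open>Re \<le> A\<close> into the unit disc\<close>
  define \<psi> where "\<psi> = (\<lambda>u. L u / (2 * of_real A - L u))"
  have \<psi>w: "norm (\<psi> w) \<le> 2 / R"
  proof (rule norm_le_of_zero_at_center[OF _ _ _ _ w])
    show "\<psi> holomorphic_on ball 0 R"
      unfolding \<psi>_def using den by (intro holomorphic_intros hol) auto
    show "norm (\<psi> u) \<le> 1" if "u \<in> ball 0 R" for u
      using norm_le_norm_reflect[OF re[OF that] A] den[OF that]
      by (simp add: \<psi>_def norm_divide divide_le_eq_1)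
  qed (use R L0 in \<open>simp_all add: \<psi>_def\<close>)
  have "L w * (1 + \<psi> w) = 2 * of_real A * \<psi> w"
    using den[of w] w R by (simp add: \<psi>_def field_simps)
  then have "norm (L w) * norm (1 + \<psi> w) = 2 * A * norm (\<psi> w)"
    using A by (metis norm_mult norm_of_real abs_of_pos norm_numeral mult.assoc)
  moreover have "1 / 2 \<le> norm (1 + \<psi> w)"
  proof -
    have "2 / R \<le> 1 / 2"
      using R by (simp add: field_simps)
    then show ?thesis
      using norm_triangle_ineq2[of 1 "- \<psi> w"] \<psi>w by (simp add: norm_minus_commute)
  qed
  ultimately have "norm (L w) * (1 / 2) \<le> 2 * A * (2 / R)"
    using \<psi>w A by (smt (verit) mult_left_mono mult_mono norm_ge_zero)
  then show ?thesis
    by (simp add: field_simps)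
qed

lemma zero_free_norm_diff_center_le:
  fixes G :: "complex \<Rightarrow> complex"
  assumes hol: "G holomorphic_on ball 0 R" and nz: "\<And>w. w \<in> ball 0 R \<Longrightarrow> G w \<noteq> 0"
    and R: "R \<ge> 4" and A: "A > 0" "16 * A \<le> R"
    and bound: "\<And>w. w \<in> ball 0 R \<Longrightarrow> norm (G w) \<le> norm (G 0) * exp A"
    and w: "norm w \<le> 1"
  shows "norm (G w - G 0) \<le> 12 * A / R * norm (G 0)"
proof -
  obtain l where l: "l holomorphic_on ball 0 R" "\<And>w. w \<in> ball 0 R \<Longrightarrow> G w = exp (l w)"
    using contractible_imp_holomorphic_log[OF hol convex_imp_contractible[OF convex_ball] nz] by blast
  define L where "L = (\<lambda>w. l w - l 0)"
  have center: "0 \<in> ball (0::complex) R"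
    using R by simp
  have GL: "G u = G 0 * exp (L u)" if "u \<in> ball 0 R" for u
    using l(2)[OF that] l(2)[OF center] by (simp add: L_def exp_diff)
  have G0: "norm (G 0) > 0"
    using nz[OF center] by simp
  have "Re (L u) \<le> A" if "u \<in> ball 0 R" for u
    using bound[OF that] GL[OF that] G0 by (simp add: norm_mult)
  then have "norm (L w) \<le> 8 * A / R"
    by (intro Borel_Caratheodory_bound[OF _ R _ A(1) _ w]) (auto simp: L_def intro!: holomorphic_intros l(1))
  moreover have "8 * A / R \<le> 1 / 2"
    using A R by (simp add: field_simps)
  ultimately have "norm (exp (L w) - 1) \<le> 3 / 2 * norm (L w)"
    by (intro norm_exp_bounds(2)) linarith
  also have "\<dots> \<le> 3 / 2 * (8 * A / R)"
    using \<open>norm (L w) \<le> 8 * A / R\<close> by simp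
  finally have "norm (exp (L w) - 1) \<le> 3 / 2 * (8 * A / R)" .
  moreover have "norm (G w - G 0) = norm (G 0) * norm (exp (L w) - 1)"
    using GL[of w] w R by (simp add: norm_mult[symmetric] algebra_simps)
  ultimately show ?thesis
    using mult_left_mono[of "norm (exp (L w) - 1)" "12 * A / R" "norm (G 0)"] by (simp add: mult.commute)
qed

lemma exp_add_le_mult_exp:
  fixes s Y c :: real
  assumes "s \<ge> 0" "Y \<ge> 0" "c > 0"
  shows "exp s + Y \<le> c * exp (s + \<bar>ln (1 + Y) - ln c\<bar>)"
proof -
  have "exp s + Y \<le> exp s * (1 + Y)"
    using assms mult_left_mono[of 1 "exp s" Y] by (simp add: algebra_simps)
  also have "\<dots> = c * exp (s + (ln (1 + Y) - ln c))"
    using assms by (simp add: exp_add exp_diff)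
  also have "\<dots> \<le> c * exp (s + \<bar>ln (1 + Y) - ln c\<bar>)"
    using assms by simp
  finally show ?thesis .
qed

lemma powr_add_const_div_tendsto_0:
  fixes \<sigma> C c :: real
  assumes "\<sigma> < 1" "c > 0"
  shows "((\<lambda>R. ((c * R) powr \<sigma> + C) / R) \<longlongrightarrow> 0) at_top"
proof -
  have "((\<lambda>R. c powr \<sigma> * R powr (\<sigma> - 1) + C / R) \<longlongrightarrow> c powr \<sigma> * 0 + 0) at_top"
    using assms(1)
    by (intro tendsto_intros tendsto_neg_powr tendsto_divide_0[OF tendsto_const]
        filterlim_at_top_imp_at_infinity filterlim_ident) auto
  moreover have "\<forall>\<^sub>F R in at_top. c powr \<sigma> * R powr (\<sigma> - 1) + C / R = ((c * R) powr \<sigma> + C) / R"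
    using eventually_gt_at_top[of 0]
    by eventually_elim (use assms(2) in \<open>simp add: powr_mult powr_diff field_simps\<close>)
  ultimately show ?thesis
    by (simp add: tendsto_cong)
qed

section \<open>Counting zeros\<close>

lemma card_zeros_le_circle_bound:
  fixes g :: "complex \<Rightarrow> complex" and b :: "'i \<Rightarrow> complex"
  assumes hol: "g holomorphic_on UNIV" and g0: "g 0 \<noteq> 0" and K: "finite K"
    and mult: "\<And>p. int (card {k\<in>K. b k = p}) \<le> zorder g p"
    and small: "\<And>k. k \<in> K \<Longrightarrow> norm (b k) \<le> r" and r: "r > 0"
    and M: "\<And>w. norm w = 3 * r \<Longrightarrow> norm (g w) \<le> M"
  shows "norm (g 0) * 2 ^ card K \<le> M"
proof -
  obtain H where H: "H holomorphic_on UNIV" "\<And>w. g w = H w * (\<Prod>k\<in>K. 1 - w / b k)" "H 0 = g 0"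
    by (rule entire_divide_zeros[OF K hol g0 mult], rule that)
  have circle: "norm (H w) \<le> M / 2 ^ card K" if w: "norm w = 3 * r" for w
  proof -
    have "b k \<noteq> 0 \<and> (1 + 2) * norm (b k) \<le> norm w" if "k \<in> K" for k
    proof
      show "b k \<noteq> 0"
        using zero_if_card_le_zorder[OF hol g0 K mult that] g0 by (metis)
      show "(1 + 2) * norm (b k) \<le> norm w"
        using small[OF that] w by simp
    qed
    then have "2 ^ card K \<le> norm (\<Prod>k\<in>K. 1 - w / b k)"
      by (intro norm_prod_one_minus_divide_ge) auto
    then have "norm (H w) * 2 ^ card K \<le> norm (g w)"
      using mult_left_mono[OF _ norm_ge_zero[of "H w"]] by (simp add: H(2) norm_mult)
    then show ?thesis
      using M[OF w] by (simp add: le_divide_eq)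
  qed
  have "norm (H 0) \<le> M / 2 ^ card K"
    by (rule entire_norm_le_of_circle[OF H(1) _ circle]) (use r in auto)
  then show ?thesis
    using H(3) by (simp add: field_simps)
qed

lemma powr_mult_max_le:
  fixes c r s \<sigma> :: real
  assumes "0 \<le> \<sigma>" "\<sigma> \<le> 1" "c \<ge> 1" "r \<ge> 0" "s \<ge> 0"
  shows "(c * max r s) powr \<sigma> \<le> c * (r powr \<sigma> + s powr \<sigma>)"
proof -
  have "(c * max r s) powr \<sigma> = c powr \<sigma> * max r s powr \<sigma>"
    using assms by (simp add: powr_mult)
  moreover have "c powr \<sigma> \<le> c"
    using assms powr_mono[of \<sigma> 1 c] by simp
  moreover have "max r s powr \<sigma> \<le> r powr \<sigma> + s powr \<sigma>"
    by (simp add: max_def)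
  ultimately show ?thesis
    using assms mult_mono[of "c powr \<sigma>" c "max r s powr \<sigma>" "r powr \<sigma> + s powr \<sigma>"] by simp
qed

lemma card_zeros_le_powr:
  fixes g :: "complex \<Rightarrow> complex" and b :: "'i \<Rightarrow> complex"
  assumes hol: "g holomorphic_on UNIV" and g0: "g 0 \<noteq> 0" and \<sigma>: "0 \<le> \<sigma>" "\<sigma> \<le> 1"
    and growth: "\<And>w. norm w \<ge> R0 \<Longrightarrow> norm (g w) \<le> norm (g 0) * exp (norm w powr \<sigma> + C)"
  obtains \<alpha> \<beta> where "\<And>r K. r \<ge> 1 \<Longrightarrow> finite K \<Longrightarrow> (\<And>p. int (card {k\<in>K. b k = p}) \<le> zorder g p) \<Longrightarrow>
      (\<And>k. k \<in> K \<Longrightarrow> norm (b k) \<le> r) \<Longrightarrow> real (card K) \<le> \<alpha> * r powr \<sigma> + \<beta>"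
proof -
  define R1 where "R1 = max 1 (R0 / 3)"
  show ?thesis
  proof (rule that[of "3 / ln 2" "(3 * R1 powr \<sigma> + C) / ln 2"])
    fix r K
    assume r: "r \<ge> 1" and K: "finite K" and mult: "\<And>p. int (card {k\<in>K. b k = p}) \<le> zorder g p"
      and small: "\<And>k. k \<in> K \<Longrightarrow> norm (b k) \<le> r"
    define s where "s = max r R1"
    have s: "s \<ge> 1" "3 * s \<ge> R0" "r \<le> s"
      by (auto simp: s_def R1_def)
    have "norm (g 0) * 2 ^ card K \<le> norm (g 0) * exp ((3 * s) powr \<sigma> + C)"
    proof (rule card_zeros_le_circle_bound[OF hol g0 K mult])
      show "norm (b k) \<le> s" if "k \<in> K" for k
        using small[OF that] s(3) by linarith
      show "norm (g w) \<le> norm (g 0) * exp ((3 * s) powr \<sigma> + C)" if "norm w = 3 * s" for w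
        using growth[of w] that s(2) by simp
    qed (use s in simp)
    then have "2 ^ card K \<le> exp ((3 * s) powr \<sigma> + C)"
      using g0 by simp
    then have "ln (2 ^ card K) \<le> ln (exp ((3 * s) powr \<sigma> + C))"
      by (intro ln_mono) auto
    then have "real (card K) * ln 2 \<le> (3 * s) powr \<sigma> + C"
      by (simp add: ln_realpow)
    moreover have "(3 * s) powr \<sigma> \<le> 3 * (r powr \<sigma> + R1 powr \<sigma>)"
      unfolding s_def using \<sigma> r by (intro powr_mult_max_le) (auto simp: R1_def)
    ultimately have "real (card K) * ln 2 \<le> 3 * r powr \<sigma> + (3 * R1 powr \<sigma> + C)"
      by simp
    then show "real (card K) \<le> 3 / ln 2 * r powr \<sigma> + (3 * R1 powr \<sigma> + C) / ln 2"
      by (simp add: field_simps)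
  qed
qed

lemma finite_of_counting:
  fixes b :: "'i \<Rightarrow> complex"
  assumes count: "\<And>r J. r \<ge> 1 \<Longrightarrow> finite J \<Longrightarrow> J \<subseteq> I \<Longrightarrow> (\<And>k. k \<in> J \<Longrightarrow> norm (b k) \<le> r) \<Longrightarrow>
      real (card J) \<le> \<alpha> * r powr \<sigma> + \<beta>"
  shows "finite {k\<in>I. norm (b k) \<le> r}"
proof (rule ccontr)
  assume "infinite {k\<in>I. norm (b k) \<le> r}"
  then obtain J where J: "J \<subseteq> {k\<in>I. norm (b k) \<le> r}" "finite J"
      "card J = nat \<lceil>\<alpha> * max r 1 powr \<sigma> + \<beta>\<rceil> + 1"
    using infinite_arbitrarily_large by blast
  have "real (card J) \<le> \<alpha> * max r 1 powr \<sigma> + \<beta>"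
    by (rule count) (use J in auto)
  then show False
    using J(3) by linarith
qed

lemma inverse_le_dyadic_term:
  fixes x \<delta> :: real
  assumes "0 < \<delta>" "\<delta> \<le> 1" "\<delta> \<le> x"
  obtains m where "x \<le> 2 ^ m" "inverse x \<le> 2 / \<delta> * (1/2) ^ m"
proof -
  have ex: "\<exists>m. x \<le> (2::real) ^ m"
    using real_arch_pow[of 2 x] by (auto intro: less_imp_le)
  define m where "m = (LEAST m. x \<le> (2::real) ^ m)"
  have m: "x \<le> 2 ^ m"
    unfolding m_def using ex by (rule LeastI_ex)
  have "inverse x \<le> 2 / \<delta> * (1/2) ^ m"
  proof (cases m)
    case 0
    have "inverse x \<le> inverse \<delta>"
      using assms by (intro le_imp_inverse_le) auto
    then show ?thesis
      using 0 assms by (simp add: field_simps)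
  next
    case (Suc m')
    have "2 ^ m' < x"
      using not_less_Least[of m' "\<lambda>m. x \<le> (2::real) ^ m"] Suc by (simp add: m_def)
    then have "inverse x \<le> inverse (2 ^ m')"
      by (intro le_imp_inverse_le) auto
    also have "\<dots> = 2 * (1/2) ^ m"
      using Suc by (simp add: power_divide field_simps)
    also have "\<dots> \<le> 2 / \<delta> * (1/2) ^ m"
      using assms by (intro mult_right_mono) (auto simp: field_simps)
    finally show ?thesis .
  qed
  then show ?thesis
    using that m by blast
qed

lemma half_pow_mul_powr_pow: "(1/2::real) ^ m * (2 ^ m) powr \<sigma> = (2 powr (\<sigma> - 1)) ^ m"
proof -
  have "(1/2::real) ^ m * (2 ^ m) powr \<sigma> = 2 powr (- real m) * 2 powr (real m * \<sigma>)"
    by (simp add: powr_realpow[symmetric] powr_powr powr_minus power_one_over inverse_eq_divide)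
  also have "\<dots> = 2 powr ((\<sigma> - 1) * real m)"
    by (simp add: powr_add[symmetric] algebra_simps)
  also have "\<dots> = (2 powr (\<sigma> - 1)) ^ m"
    by (simp add: powr_powr[symmetric] powr_realpow)
  finally show ?thesis .
qed

text \<open>Dyadic decomposition: a point with \<open>2 ^ (m - 1) < norm (b k) \<le> 2 ^ m\<close> contributes at most
  \<open>2 ^ (1 - m)\<close> to the sum, and at most \<open>\<alpha> 2 ^ (m \<sigma>) + \<beta>\<close> points lie in the disc of radius \<open>2 ^ m\<close>;
  since \<open>\<sigma> < 1\<close> the resulting series converges.\<close>
lemma sum_inverse_bounded_of_counting:
  fixes b :: "'i \<Rightarrow> complex"
  assumes \<sigma>: "\<sigma> < 1" and \<delta>: "0 < \<delta>" "\<delta> \<le> 1" "\<And>k. k \<in> I \<Longrightarrow> \<delta> \<le> norm (b k)"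
    and count: "\<And>r J. r \<ge> 1 \<Longrightarrow> finite J \<Longrightarrow> J \<subseteq> I \<Longrightarrow> (\<And>k. k \<in> J \<Longrightarrow> norm (b k) \<le> r) \<Longrightarrow>
      real (card J) \<le> \<alpha> * r powr \<sigma> + \<beta>"
  obtains T where "\<And>J. finite J \<Longrightarrow> J \<subseteq> I \<Longrightarrow> (\<Sum>k\<in>J. norm (inverse (b k))) \<le> T"
proof -
  define u where "u k m = (if norm (b k) \<le> 2 ^ m then (1/2::real) ^ m else 0)" for k m
  define q where "q = (2::real) powr (\<sigma> - 1)"
  define v where "v m = \<alpha> * q ^ m + \<beta> * (1/2::real) ^ m" for m
  have q: "0 < q" "q < 1"
    using \<sigma> by (auto simp: q_def powr_less_one)
  have su: "summable (u k)" for k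
    by (rule summable_comparison_test[where g="\<lambda>m. (1/2::real) ^ m"])
      (auto simp: u_def intro!: summable_geometric)
  have sv: "summable v"
    unfolding v_def using q by (intro summable_add summable_mult summable_geometric) auto
  have inverse_le: "norm (inverse (b k)) \<le> 2 / \<delta> * suminf (u k)" if k: "k \<in> I" for k
  proof -
    obtain m where "norm (b k) \<le> 2 ^ m" "inverse (norm (b k)) \<le> 2 / \<delta> * (1/2) ^ m"
      using inverse_le_dyadic_term[OF \<delta>(1,2) \<delta>(3)[OF k]] by blast
    then have "inverse (norm (b k)) \<le> 2 / \<delta> * u k m"
      by (simp add: u_def)
    also have "\<dots> \<le> 2 / \<delta> * suminf (u k)"
      using sum_le_suminf[OF su, of "{m}"] \<delta>(1) by (intro mult_left_mono) (auto simp: u_def)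
    finally show ?thesis
      by (simp add: norm_inverse)
  qed
  have sum_u_le: "(\<Sum>k\<in>J. u k m) \<le> v m" if J: "finite J" "J \<subseteq> I" for J m
  proof -
    have "(\<Sum>k\<in>J. u k m) = (1/2) ^ m * real (card {k\<in>J. norm (b k) \<le> 2 ^ m})"
      using J(1) by (simp add: u_def sum.If_cases Int_def conj_commute)
    also have "\<dots> \<le> (1/2) ^ m * (\<alpha> * (2 ^ m) powr \<sigma> + \<beta>)"
      using J by (intro mult_left_mono count) auto
    also have "\<dots> = v m"
      using half_pow_mul_powr_pow[of m \<sigma>] by (simp add: v_def q_def algebra_simps)
    finally show ?thesis .
  qed
  show ?thesis
  proof (rule that)
    fix J assume J: "finite J" "J \<subseteq> I"
    have "(\<Sum>k\<in>J. norm (inverse (b k))) \<le> (\<Sum>k\<in>J. 2 / \<delta> * suminf (u k))"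
      using J inverse_le by (intro sum_mono) auto
    also have "\<dots> = 2 / \<delta> * (\<Sum>m. \<Sum>k\<in>J. u k m)"
      using su by (simp add: sum_distrib_left suminf_sum)
    also have "\<dots> \<le> 2 / \<delta> * suminf v"
      using \<delta>(1) J su sv sum_u_le by (intro mult_left_mono suminf_le summable_sum) auto
    finally show "(\<Sum>k\<in>J. norm (inverse (b k))) \<le> 2 / \<delta> * suminf v" .
  qed
qed

lemma bounded_sums_tail_le:
  fixes u :: "'a \<Rightarrow> real"
  assumes bound: "\<And>J. finite J \<Longrightarrow> J \<subseteq> I \<Longrightarrow> sum u J \<le> T" and \<eta>: "\<eta> > 0"
  obtains F where "finite F" "F \<subseteq> I" "\<And>J. finite J \<Longrightarrow> J \<subseteq> I \<Longrightarrow> J \<inter> F = {} \<Longrightarrow> sum u J \<le> \<eta>"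
proof -
  define X where "X = sum u ` {J. finite J \<and> J \<subseteq> I}"
  have ne: "X \<noteq> {}" and bdd: "bdd_above X"
    using bound by (auto simp: X_def bdd_above_def)
  have "Sup X - \<eta> < Sup X"
    using \<eta> by simp
  then obtain x where "x \<in> X" "Sup X - \<eta> < x"
    using less_cSupE[OF _ ne] by blast
  then obtain F where F: "finite F" "F \<subseteq> I" "Sup X - \<eta> < sum u F"
    by (auto simp: X_def)
  show ?thesis
  proof (rule that[OF F(1,2)])
    fix J assume J: "finite J" "J \<subseteq> I" "J \<inter> F = {}"
    have "sum u (J \<union> F) \<le> Sup X"
      using J F by (intro cSup_upper[OF _ bdd]) (auto simp: X_def)
    moreover have "sum u (J \<union> F) = sum u J + sum u F"
      using J F by (simp add: sum.union_disjoint)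
    ultimately show "sum u J \<le> \<eta>"
      using F(3) by linarith
  qed
qed

section \<open>Elementary symmetric functions\<close>

definition esym :: "'i set \<Rightarrow> nat \<Rightarrow> ('i \<Rightarrow> 'a::comm_ring_1) \<Rightarrow> 'a" where
  "esym K n b = (\<Sum>S\<in>{S. S \<subseteq> K \<and> card S = n}. \<Prod>k\<in>S. b k)"

lemma prod_neg_fps_X_mult_const:
  fixes c :: "'i \<Rightarrow> 'a::comm_ring_1"
  shows "(\<Prod>k\<in>S. - (fps_X * fps_const (c k))) =
    fps_const ((-1) ^ card S * (\<Prod>k\<in>S. c k)) * fps_X ^ card S"
proof (induction S rule: infinite_finite_induct)
  case (insert x F)
  have "- (fps_X * fps_const (c x)) = fps_const (- c x) * fps_X"
    by (simp add: fps_const_neg mult.commute)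
  then have "(\<Prod>k\<in>insert x F. - (fps_X * fps_const (c k))) =
      (fps_const (- c x) * fps_const ((-1) ^ card F * (\<Prod>k\<in>F. c k))) * (fps_X * fps_X ^ card F)"
    using insert by (simp add: ac_simps)
  also have "\<dots> = fps_const ((-1) ^ Suc (card F) * (c x * (\<Prod>k\<in>F. c k))) * fps_X ^ Suc (card F)"
    by (simp only: fps_const_mult power_Suc) (simp add: algebra_simps)
  finally show ?case
    using insert by simp
qed auto

lemma fps_nth_prod_one_minus_X:
  fixes b :: "'i \<Rightarrow> 'a::comm_ring_1"
  assumes "finite K"
  shows "fps_nth (\<Prod>k\<in>K. 1 - fps_X * fps_const (b k)) n = (-1) ^ n * esym K n b"
proof -
  have "(\<Prod>k\<in>K. 1 - fps_X * fps_const (b k)) = (\<Prod>k\<in>K. - (fps_X * fps_const (b k)) + 1)"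
    by simp
  also have "\<dots> = (\<Sum>S\<in>Pow K. (\<Prod>k\<in>S. - (fps_X * fps_const (b k))) * (\<Prod>k\<in>K-S. 1))"
    by (rule prod_add[OF assms])
  also have "\<dots> = (\<Sum>S\<in>Pow K. fps_const ((-1) ^ card S * (\<Prod>k\<in>S. b k)) * fps_X ^ card S)"
    by (simp add: prod_neg_fps_X_mult_const)
  finally have "fps_nth (\<Prod>k\<in>K. 1 - fps_X * fps_const (b k)) n =
      (\<Sum>S\<in>Pow K. if card S = n then (-1) ^ n * (\<Prod>k\<in>S. b k) else 0)"
    by (auto simp: fps_sum_nth fps_X_power_nth intro!: sum.cong)
  also have "\<dots> = (\<Sum>S\<in>{S. S \<subseteq> K \<and> card S = n}. (-1) ^ n * (\<Prod>k\<in>S. b k))"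
    using assms by (simp add: sum.If_cases Pow_def Collect_conj_eq)
  finally show ?thesis
    by (simp add: esym_def sum_distrib_left)
qed

lemma sum_prod_le_exp_sum:
  fixes x :: "'i \<Rightarrow> real"
  assumes "finite K" "\<And>k. k \<in> K \<Longrightarrow> x k \<ge> 0" "F \<subseteq> Pow K"
  shows "(\<Sum>S\<in>F. \<Prod>k\<in>S. x k) \<le> exp (\<Sum>k\<in>K. x k)"
proof -
  have "(\<Sum>S\<in>F. \<Prod>k\<in>S. x k) \<le> (\<Sum>S\<in>Pow K. \<Prod>k\<in>S. x k)"
    using assms by (intro sum_mono2) (auto intro!: prod_nonneg)
  also have "\<dots> = (\<Prod>k\<in>K. x k + 1)"
    using prod_add[OF assms(1), of x "\<lambda>_. 1"] by simp
  also have "\<dots> \<le> (\<Prod>k\<in>K. exp (x k))"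
    using assms by (intro prod_mono) (auto simp: add.commute exp_ge_add_one_self)
  also have "\<dots> = exp (\<Sum>k\<in>K. x k)"
    by (simp add: exp_sum assms(1))
  finally show ?thesis .
qed

lemma norm_esym_le_exp:
  fixes b :: "'i \<Rightarrow> 'a::{real_normed_field}"
  assumes "finite K"
  shows "norm (esym K n b) \<le> exp (\<Sum>k\<in>K. norm (b k))"
proof -
  have "norm (esym K n b) \<le> (\<Sum>S\<in>{S. S \<subseteq> K \<and> card S = n}. \<Prod>k\<in>S. norm (b k))"
    unfolding esym_def by (rule order_trans[OF norm_sum]) (simp add: prod_norm)
  also have "\<dots> \<le> exp (\<Sum>k\<in>K. norm (b k))"
    using assms by (intro sum_prod_le_exp_sum) auto
  finally show ?thesis .
qed

lemma summable_on_prod_card_eq: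
  fixes b :: "'i \<Rightarrow> 'a::{banach, real_normed_field}"
  assumes bound: "\<And>J. finite J \<Longrightarrow> J \<subseteq> I \<Longrightarrow> (\<Sum>k\<in>J. norm (b k)) \<le> T" and n: "n \<ge> 1"
  shows "(\<lambda>S. \<Prod>k\<in>S. b k) summable_on {S. S \<subseteq> I \<and> card S = n}"
proof -
  have "(\<Sum>S\<in>F. norm (\<Prod>k\<in>S. b k)) \<le> exp T"
    if F: "F \<subseteq> {S. S \<subseteq> I \<and> card S = n}" "finite F" for F
  proof -
    have finite_union: "finite (\<Union>F)"
    proof (rule finite_Union)
      show "finite S" if "S \<in> F" for S
        using F(1) that n by (intro card_ge_0_finite) auto
    qed (fact F(2))
    have "(\<Sum>S\<in>F. norm (\<Prod>k\<in>S. b k)) = (\<Sum>S\<in>F. \<Prod>k\<in>S. norm (b k))"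
      by (simp add: prod_norm)
    also have "\<dots> \<le> exp (\<Sum>k\<in>\<Union>F. norm (b k))"
      using finite_union by (intro sum_prod_le_exp_sum) auto
    also have "\<dots> \<le> exp T"
      using bound[OF finite_union] F(1) by auto
    finally show ?thesis .
  qed
  then have "(\<lambda>S. norm (\<Prod>k\<in>S. b k)) summable_on {S. S \<subseteq> I \<and> card S = n}"
    by (intro nonneg_bdd_above_summable_on) (auto simp: bdd_above_def)
  then show ?thesis
    by (rule abs_summable_summable)
qed

lemma esym_tendsto_infsum:
  fixes b :: "nat \<Rightarrow> 'a::{banach, real_normed_field}"
  assumes bound: "\<And>J. finite J \<Longrightarrow> J \<subseteq> I \<Longrightarrow> (\<Sum>k\<in>J. norm (b k)) \<le> T" and n: "n \<ge> 1"
  shows "(\<lambda>N. esym {k\<in>I. k < N} n b) \<longlonglongrightarrow> (\<Sum>\<^sub>\<infinity>S\<in>{S. S \<subseteq> I \<and> card S = n}. \<Prod>k\<in>S. b k)"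
proof -
  define A where "A = {S. S \<subseteq> I \<and> card S = n}"
  define A_upto where "A_upto N = {S. S \<subseteq> {k\<in>I. k < N} \<and> card S = n}" for N
  have "(sum (\<lambda>S. \<Prod>k\<in>S. b k) \<longlongrightarrow> (\<Sum>\<^sub>\<infinity>S\<in>A. \<Prod>k\<in>S. b k)) (finite_subsets_at_top A)"
    using summable_on_prod_card_eq[OF bound n] by (simp add: A_def has_sum_def[symmetric] has_sum_infsum)
  moreover have "filterlim A_upto (finite_subsets_at_top A) sequentially"
    unfolding filterlim_finite_subsets_at_top
  proof (intro allI impI)
    fix X assume X: "finite X \<and> X \<subseteq> A"
    have "finite (\<Union>X)"
    proof (rule finite_Union)
      show "finite S" if "S \<in> X" for S
        using X that n by (intro card_ge_0_finite) (auto simp: A_def)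
    qed (use X in simp)
    then obtain M where M: "\<Union>X \<subseteq> {..<M}"
      using finite_nat_bounded by blast
    have "finite (A_upto N) \<and> X \<subseteq> A_upto N \<and> A_upto N \<subseteq> A" if "N \<ge> M" for N
    proof (intro conjI)
      show "finite (A_upto N)"
        by (rule finite_subset[of _ "Pow {k\<in>I. k < N}"]) (auto simp: A_upto_def)
      show "X \<subseteq> A_upto N"
        using X M that by (fastforce simp: A_upto_def A_def)
    qed (auto simp: A_upto_def A_def)
    then show "\<forall>\<^sub>F N in sequentially. finite (A_upto N) \<and> X \<subseteq> A_upto N \<and> A_upto N \<subseteq> A"
      unfolding eventually_sequentially by blast
  qed
  ultimately have "((\<lambda>N. sum (\<lambda>S. \<Prod>k\<in>S. b k) (A_upto N)) \<longlongrightarrow> (\<Sum>\<^sub>\<infinity>S\<in>A. \<Prod>k\<in>S. b k)) sequentially"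
    by (rule filterlim_compose)
  then show ?thesis
    by (simp add: esym_def A_upto_def A_def)
qed

lemma fps_nth_le_of_near_constant:
  fixes G :: "complex \<Rightarrow> complex"
  assumes hol: "G holomorphic_on UNIV" and F: "G has_fps_expansion F"
    and near: "\<And>w. norm w \<le> 1 \<Longrightarrow> norm (G w - G 0) \<le> \<epsilon>" and i: "i \<ge> 1"
  shows "norm (fps_nth F i) \<le> \<epsilon>"
proof -
  have "(deriv ^^ i) (\<lambda>w. G w - G 0) 0 = (deriv ^^ i) G 0 - (deriv ^^ i) (\<lambda>w. G 0) 0"
    by (rule higher_deriv_diff) (use hol in auto)
  then have deriv_eq: "(deriv ^^ i) G 0 = (deriv ^^ i) (\<lambda>w. G w - G 0) 0"
    using i by simp
  have "norm ((deriv ^^ i) (\<lambda>w. G w - G 0) 0) \<le> fact i * \<epsilon> / 1 ^ i"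
  proof (rule Cauchy_inequality)
    show "(\<lambda>w. G w - G 0) holomorphic_on ball 0 1"
      using hol by (intro holomorphic_intros) (auto intro: holomorphic_on_subset)
    show "continuous_on (cball 0 1) (\<lambda>w. G w - G 0)"
      using hol by (intro continuous_intros holomorphic_on_imp_continuous_on) (auto intro: holomorphic_on_subset)
  qed (use near in auto)
  moreover have "norm (fps_nth F i) = norm ((deriv ^^ i) G 0) / fact i"
    using fps_nth_fps_expansion[OF F, of i] by (simp add: norm_divide)
  ultimately show ?thesis
    using deriv_eq by (simp add: pos_divide_le_eq mult.commute)
qed

lemma fps_nth_mult_prod_approx:
  fixes G :: "complex \<Rightarrow> complex" and b :: "'i \<Rightarrow> complex"
  assumes hol: "G holomorphic_on UNIV" and K: "finite K"
    and near: "\<And>w. norm w \<le> 1 \<Longrightarrow> norm (G w - G 0) \<le> \<epsilon>"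
    and A: "(\<lambda>w. G w * (\<Prod>k\<in>K. 1 - w / b k)) has_fps_expansion A" and n: "n \<ge> 1"
  shows "norm (fps_nth A n - G 0 * ((-1) ^ n * esym K n (\<lambda>k. inverse (b k))))
    \<le> n * \<epsilon> * exp (\<Sum>k\<in>K. norm (inverse (b k)))"
proof -
  define P where "P = (\<Prod>k\<in>K. 1 - fps_X * fps_const (inverse (b k)))"
  define FG where "FG = fps_expansion G 0"
  have FG: "G has_fps_expansion FG"
    unfolding FG_def using hol by (intro has_fps_expansion_fps_expansion) auto
  have "(\<lambda>w. \<Prod>k\<in>K. 1 - w / b k) has_fps_expansion P"
    unfolding P_def divide_inverse by (intro has_fps_expansion_prod fps_expansion_intros)
  then have "A = FG * P"
    using has_fps_expansion_mult[OF FG] A fps_expansion_unique_complex by blast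
  have P_nth: "fps_nth P j = (-1) ^ j * esym K j (\<lambda>k. inverse (b k))" for j
    unfolding P_def by (rule fps_nth_prod_one_minus_X[OF K])
  have P_le: "norm (fps_nth P j) \<le> exp (\<Sum>k\<in>K. norm (inverse (b k)))" for j
    using norm_esym_le_exp[OF K] by (simp add: P_nth norm_mult norm_power)
  have FG_le: "norm (fps_nth FG i) \<le> \<epsilon>" if "i \<ge> 1" for i
    by (rule fps_nth_le_of_near_constant[OF hol FG near that])
  have "fps_nth FG 0 = G 0"
    using fps_nth_fps_expansion[OF FG, of 0] by simp
  then have "fps_nth A n - G 0 * fps_nth P n = (\<Sum>i=1..n. fps_nth FG i * fps_nth P (n - i))"
    using \<open>A = FG * P\<close> n by (simp add: fps_mult_nth sum.atLeast_Suc_atMost)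
  then have "norm (fps_nth A n - G 0 * fps_nth P n) \<le> (\<Sum>i=1..n. norm (fps_nth FG i) * norm (fps_nth P (n - i)))"
    by (simp add: norm_mult order_trans[OF norm_sum])
  also have "\<dots> \<le> (\<Sum>i=1..n. \<epsilon> * exp (\<Sum>k\<in>K. norm (inverse (b k))))"
    using P_le FG_le near[of 0] by (intro sum_mono mult_mono) auto
  finally show ?thesis
    by (simp add: P_nth)
qed

section \<open>Level sets of an entire function of order less than one\<close>

locale entire_level_set =
  fixes f :: "complex \<Rightarrow> complex" and z :: complex and I :: "nat set" and \<phi> :: "nat \<Rightarrow> complex"
  assumes holomorphic: "f holomorphic_on UNIV"
    and order_less_1: "entire_order f < 1"
    and level_ne_0: "f z \<noteq> f 0"
    and zeros: "zeros_enum f z I \<phi>"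
begin

definition g :: "complex \<Rightarrow> complex" where
  "g w = f w - f z"

lemma g_holomorphic: "g holomorphic_on UNIV"
  unfolding g_def[abs_def] by (intro holomorphic_intros holomorphic)

lemma g_0_nonzero: "g 0 \<noteq> 0"
  using level_ne_0 by (simp add: g_def)

lemma finite_phi_preimage: "finite {k\<in>I. \<phi> k = p}"
  using zeros by (simp add: zeros_enum_def)

lemma card_phi_preimage: "card {k\<in>I. \<phi> k = p} = (if g p = 0 then nat (zorder g p) else 0)"
  using zeros by (simp add: zeros_enum_def g_def[abs_def])

lemma g_phi_eq_0: "k \<in> I \<Longrightarrow> g (\<phi> k) = 0"
  using card_phi_preimage[of "\<phi> k"] finite_phi_preimage[of "\<phi> k"]
  by (auto split: if_splits simp: card_eq_0_iff)

lemma phi_nonzero: "k \<in> I \<Longrightarrow> \<phi> k \<noteq> 0"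
  using g_phi_eq_0 g_0_nonzero by metis

lemma card_zeros_eq_zorder:
  assumes "{k\<in>I. \<phi> k = p} \<subseteq> K" "K \<subseteq> I"
  shows "int (card {k\<in>K. \<phi> k = p}) = zorder g p"
proof -
  have "{k\<in>K. \<phi> k = p} = {k\<in>I. \<phi> k = p}"
    using assms by auto
  moreover have "zorder g p = 0" if "g p \<noteq> 0"
    using zorder_eq_0I[of g p] g_holomorphic that analytic_on_holomorphic by blast
  ultimately show ?thesis
    using card_phi_preimage[of p] entire_zorder_pos_iff[OF g_holomorphic g_0_nonzero, of p] by auto
qed

lemma card_zeros_le_zorder:
  assumes "K \<subseteq> I"
  shows "int (card {k\<in>K. \<phi> k = p}) \<le> zorder g p"
proof -
  have "card {k\<in>K. \<phi> k = p} \<le> card {k\<in>I. \<phi> k = p}"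
    using assms finite_phi_preimage by (intro card_mono) auto
  then show ?thesis
    using card_zeros_eq_zorder[of p I] by simp
qed

lemma card_zeros_diff_le_zorder:
  assumes K: "finite K" "K \<subseteq> I" and Z: "Z \<subseteq> K"
  shows "int (card {k\<in>K - Z. \<phi> k = p}) \<le> zorder g p - int (card {k\<in>Z. \<phi> k = p})"
proof -
  have "{k\<in>K. \<phi> k = p} = {k\<in>Z. \<phi> k = p} \<union> {k\<in>K - Z. \<phi> k = p}"
    using Z by auto
  moreover have "finite Z"
    using Z K(1) by (rule finite_subset)
  ultimately have "card {k\<in>K. \<phi> k = p} = card {k\<in>Z. \<phi> k = p} + card {k\<in>K - Z. \<phi> k = p}"
    using K(1) by (subst card_Un_disjoint[symmetric]) auto
  then show ?thesis
    using card_zeros_le_zorder[OF K(2), of p] by simp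
qed

lemma g_growth:
  obtains \<sigma> C R0 where "0 \<le> \<sigma>" "\<sigma> < 1" "0 \<le> C"
    "\<And>w. norm w \<ge> R0 \<Longrightarrow> norm (g w) \<le> norm (g 0) * exp (norm w powr \<sigma> + C)"
proof -
  obtain \<sigma> where \<sigma>: "ereal \<sigma> < 1" "\<sigma> \<ge> 0"
      "\<forall>\<^sub>F r in at_top. \<forall>w. norm w = r \<longrightarrow> norm (f w) \<le> exp (r powr \<sigma>)"
    using order_less_1 unfolding entire_order_def Inf_less_iff by blast
  then obtain R0 where R0: "\<And>w. norm w \<ge> R0 \<Longrightarrow> norm (f w) \<le> exp (norm w powr \<sigma>)"
    by (auto simp: eventually_at_top_linorder)
  define C where "C = \<bar>ln (1 + norm (f z)) - ln (norm (g 0))\<bar>"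
  show ?thesis
  proof (rule that)
    show "norm (g w) \<le> norm (g 0) * exp (norm w powr \<sigma> + C)" if "norm w \<ge> R0" for w
    proof -
      have "norm (g w) \<le> exp (norm w powr \<sigma>) + norm (f z)"
        using R0[OF that] norm_triangle_ineq4[of "f w" "f z"] by (simp add: g_def)
      also have "\<dots> \<le> norm (g 0) * exp (norm w powr \<sigma> + C)"
        unfolding C_def using g_0_nonzero by (intro exp_add_le_mult_exp) auto
      finally show ?thesis .
    qed
    show "0 \<le> \<sigma>" "\<sigma> < 1" "0 \<le> C"
      using \<sigma>(1,2) by (simp_all add: C_def)
  qed
qed

lemma zeros_bounded_below:
  obtains \<delta> where "0 < \<delta>" "\<delta> \<le> 1" "\<And>k. k \<in> I \<Longrightarrow> \<delta> \<le> norm (\<phi> k)"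
proof -
  have "isCont g 0"
    using g_holomorphic holomorphic_on_imp_continuous_on continuous_on_eq_continuous_at by blast
  then obtain e where e: "e > 0" "\<And>y. dist 0 y < e \<Longrightarrow> g y \<noteq> 0"
    using continuous_at_avoid[of 0 g 0] g_0_nonzero by auto
  have "min e 1 \<le> norm (\<phi> k)" if "k \<in> I" for k
    using e(2)[of "\<phi> k"] g_phi_eq_0[OF that] by force
  then show ?thesis
    using that[of "min e 1"] e(1) by simp
qed

lemma zeros_counting:
  obtains \<sigma> \<alpha> \<beta> where "\<sigma> < 1"
    "\<And>r J. r \<ge> 1 \<Longrightarrow> finite J \<Longrightarrow> J \<subseteq> I \<Longrightarrow> (\<And>k. k \<in> J \<Longrightarrow> norm (\<phi> k) \<le> r) \<Longrightarrow>
       real (card J) \<le> \<alpha> * r powr \<sigma> + \<beta>"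
proof -
  obtain \<sigma> C R0 where \<sigma>: "0 \<le> \<sigma>" "\<sigma> < 1"
      and growth: "\<And>w. norm w \<ge> R0 \<Longrightarrow> norm (g w) \<le> norm (g 0) * exp (norm w powr \<sigma> + C)"
    by (rule g_growth, rule that)
  obtain \<alpha> \<beta> where count: "\<And>r J. r \<ge> 1 \<Longrightarrow> finite J \<Longrightarrow>
      (\<And>p. int (card {k\<in>J. \<phi> k = p}) \<le> zorder g p) \<Longrightarrow> (\<And>k. k \<in> J \<Longrightarrow> norm (\<phi> k) \<le> r) \<Longrightarrow>
      real (card J) \<le> \<alpha> * r powr \<sigma> + \<beta>"
  proof (rule card_zeros_le_powr[OF g_holomorphic g_0_nonzero \<sigma>(1), where b = \<phi>])
    show "\<sigma> \<le> 1"
      using \<sigma>(2) by simp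
    show "norm (g w) \<le> norm (g 0) * exp (norm w powr \<sigma> + C)" if "norm w \<ge> R0" for w
      using growth that .
  qed (rule that, blast)
  show ?thesis
  proof (rule that[OF \<sigma>(2)])
    fix r J
    assume r: "r \<ge> 1" and J: "finite J" "J \<subseteq> I" and small: "\<And>k. k \<in> J \<Longrightarrow> norm (\<phi> k) \<le> r"
    show "real (card J) \<le> \<alpha> * r powr \<sigma> + \<beta>"
      using r J(1) card_zeros_le_zorder[OF J(2)] small by (rule count)
  qed
qed

lemma sum_inverse_zeros_bounded:
  obtains T where "\<And>J. finite J \<Longrightarrow> J \<subseteq> I \<Longrightarrow> (\<Sum>k\<in>J. norm (inverse (\<phi> k))) \<le> T"
proof -
  obtain \<sigma> \<alpha> \<beta> where \<sigma>: "\<sigma> < 1" and count: "\<And>r J. r \<ge> 1 \<Longrightarrow> finite J \<Longrightarrow> J \<subseteq> I \<Longrightarrow>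
      (\<And>k. k \<in> J \<Longrightarrow> norm (\<phi> k) \<le> r) \<Longrightarrow> real (card J) \<le> \<alpha> * r powr \<sigma> + \<beta>"
    by (rule zeros_counting) blast
  obtain \<delta> where \<delta>: "0 < \<delta>" "\<delta> \<le> 1" "\<And>k. k \<in> I \<Longrightarrow> \<delta> \<le> norm (\<phi> k)"
    by (rule zeros_bounded_below, rule that)
  show ?thesis
  proof (rule sum_inverse_bounded_of_counting[OF \<sigma> \<delta>(1,2)])
    show "\<delta> \<le> norm (\<phi> k)" if "k \<in> I" for k
      using \<delta>(3) that .
    show "real (card J) \<le> \<alpha> * r powr \<sigma> + \<beta>"
      if "r \<ge> 1" "finite J" "J \<subseteq> I" "\<And>k. k \<in> J \<Longrightarrow> norm (\<phi> k) \<le> r" for r J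
      using that by (rule count)
  qed (rule that)
qed

definition zeros_within :: "real \<Rightarrow> nat set" where
  "zeros_within r = {k\<in>I. norm (\<phi> k) \<le> r}"

lemma finite_zeros_within: "finite (zeros_within r)"
proof -
  obtain \<sigma> \<alpha> \<beta> where "\<And>r J. r \<ge> 1 \<Longrightarrow> finite J \<Longrightarrow> J \<subseteq> I \<Longrightarrow>
      (\<And>k. k \<in> J \<Longrightarrow> norm (\<phi> k) \<le> r) \<Longrightarrow> real (card J) \<le> \<alpha> * r powr \<sigma> + \<beta>"
    by (rule zeros_counting) blast
  then show ?thesis
    unfolding zeros_within_def by (rule finite_of_counting[where b = \<phi>])
qed


lemma divide_zeros_within:
  assumes R: "R > 0" and M: "\<And>w. norm w = 4 * R \<Longrightarrow> norm (g w) \<le> M"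
  obtains H where "H holomorphic_on UNIV" "H 0 = g 0"
    "\<And>w. g w = H w * (\<Prod>k\<in>zeros_within (2 * R). 1 - w / \<phi> k)"
    "\<And>p. zorder H p = zorder g p - int (card {k\<in>zeros_within (2 * R). \<phi> k = p})"
    "\<And>w. norm w \<le> 2 * R \<Longrightarrow> H w \<noteq> 0"
    "\<And>w. norm w \<le> 4 * R \<Longrightarrow> norm (H w) \<le> M"
proof -
  let ?Z = "zeros_within (2 * R)"
  have Z: "finite ?Z" "?Z \<subseteq> I"
    using finite_zeros_within by (auto simp: zeros_within_def)
  obtain H where H: "H holomorphic_on UNIV" "\<And>w. g w = H w * (\<Prod>k\<in>?Z. 1 - w / \<phi> k)" "H 0 = g 0"
      "\<And>p. zorder H p = zorder g p - int (card {k\<in>?Z. \<phi> k = p})"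
    by (rule entire_divide_zeros[OF Z(1) g_holomorphic g_0_nonzero card_zeros_le_zorder[OF Z(2)]], rule that)
  have nonzero: "H p \<noteq> 0" if "norm p \<le> 2 * R" for p
  proof -
    have "{k\<in>I. \<phi> k = p} \<subseteq> ?Z"
      using that by (auto simp: zeros_within_def)
    then have "zorder H p = 0"
      using H(4) card_zeros_eq_zorder[OF _ Z(2)] by simp
    then show ?thesis
      using entire_zorder_pos_iff[OF H(1), of 0 p] H(3) g_0_nonzero by auto
  qed
  have bound: "norm (H w) \<le> M" if "norm w \<le> 4 * R" for w
  proof (rule entire_norm_le_of_circle[OF H(1) _ _ that])
    fix u :: complex
    assume u: "norm u = 4 * R"
    have prod_ge_1: "1 ^ card ?Z \<le> norm (\<Prod>k\<in>?Z. 1 - u / \<phi> k)"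
      using u phi_nonzero by (intro norm_prod_one_minus_divide_ge) (auto simp: zeros_within_def)
    have "norm (H u) \<le> norm (g u)"
      using mult_left_mono[OF prod_ge_1 norm_ge_zero[of "H u"]] by (simp add: H(2) norm_mult)
    then show "norm (H u) \<le> M"
      using M[OF u] by linarith
  qed (use R in simp)
  show ?thesis
    using H(1,3,2,4) nonzero bound by (rule that)
qed

lemma divide_zeros_bounded:
  assumes R: "R > 0" and K: "finite K" "K \<subseteq> I" "zeros_within (2 * R) \<subseteq> K"
    and M: "\<And>w. norm w = 4 * R \<Longrightarrow> norm (g w) \<le> M"
  obtains G where "G holomorphic_on UNIV" "G 0 = g 0" "\<And>w. g w = G w * (\<Prod>k\<in>K. 1 - w / \<phi> k)"
    "\<And>w. norm w \<le> R \<Longrightarrow> G w \<noteq> 0"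
    "\<And>w. norm w \<le> R \<Longrightarrow>
       norm (G w) \<le> M * exp (2 * R * (\<Sum>k\<in>K - zeros_within (2 * R). norm (inverse (\<phi> k))))"
proof -
  let ?Z = "zeros_within (2 * R)"
  let ?s = "\<Sum>k\<in>K - ?Z. norm (inverse (\<phi> k))"
  obtain H where H: "H holomorphic_on UNIV" "H 0 = g 0" "\<And>w. g w = H w * (\<Prod>k\<in>?Z. 1 - w / \<phi> k)"
      "\<And>p. zorder H p = zorder g p - int (card {k\<in>?Z. \<phi> k = p})"
      "\<And>w. norm w \<le> 2 * R \<Longrightarrow> H w \<noteq> 0" "\<And>w. norm w \<le> 4 * R \<Longrightarrow> norm (H w) \<le> M"
    by (rule divide_zeros_within[OF R M], assumption, rule that)
  obtain G where G: "G holomorphic_on UNIV" "\<And>w. H w = G w * (\<Prod>k\<in>K - ?Z. 1 - w / \<phi> k)" "G 0 = H 0"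
  proof (rule entire_divide_zeros[of "K - ?Z" H \<phi>])
    show "finite (K - ?Z)" "H holomorphic_on UNIV" "H 0 \<noteq> 0"
      using K(1) H(1,2) g_0_nonzero by simp_all
    show "int (card {k\<in>K - ?Z. \<phi> k = p}) \<le> zorder H p" for p
      using card_zeros_diff_le_zorder[OF K, of p] H(4)[of p] by simp
  qed (rule that)
  have "g w = G w * (\<Prod>k\<in>K. 1 - w / \<phi> k)" for w
    using H(3)[of w] G(2)[of w] prod.subset_diff[OF K(3) K(1), of "\<lambda>k. 1 - w / \<phi> k"]
    by (simp add: mult_ac)
  moreover have "G w \<noteq> 0" if "norm w \<le> R" for w
    using H(5)[of w] G(2)[of w] that R by auto
  moreover have "norm (G w) \<le> M * exp (2 * R * ?s)" if w: "norm w \<le> R" for w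
  proof -
    have far: "2 * norm w \<le> norm (\<phi> k)" if "k \<in> K - ?Z" for k
      using that w K(2) by (auto simp: zeros_within_def)
    have "norm (G w) * exp (- 2 * R * ?s) \<le> norm (G w) * exp (- 2 * norm w * ?s)"
      using w by (intro mult_left_mono) (auto intro!: mult_right_mono sum_nonneg)
    also have "\<dots> \<le> norm (G w) * norm (\<Prod>k\<in>K - ?Z. 1 - w / \<phi> k)"
      using K(1) far by (intro mult_left_mono norm_prod_one_minus_divide_ge_exp) auto
    also have "\<dots> \<le> M"
      using G(2)[of w] H(6)[of w] w R by (simp add: norm_mult)
    finally show ?thesis
      by (simp add: exp_minus field_simps)
  qed
  ultimately show ?thesis
    using G(1) G(3) H(2) that by auto
qed


lemma factor_near_constant:
  assumes R: "R \<ge> 4" and K: "finite K" "K \<subseteq> I" "zeros_within (2 * R) \<subseteq> K"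
    and M: "\<And>w. norm w = 4 * R \<Longrightarrow> norm (g w) \<le> norm (g 0) * exp B" and B: "B > 0"
    and tail: "(\<Sum>k\<in>K - zeros_within (2 * R). norm (inverse (\<phi> k))) \<le> \<eta>"
    and \<theta>: "B / R + 2 * \<eta> \<le> \<theta>" "\<theta> \<le> 1 / 16"
  obtains G where "G holomorphic_on UNIV" "G 0 = g 0" "\<And>w. g w = G w * (\<Prod>k\<in>K. 1 - w / \<phi> k)"
    "\<And>w. norm w \<le> 1 \<Longrightarrow> norm (G w - g 0) \<le> 12 * \<theta> * norm (g 0)"
proof -
  let ?s = "\<Sum>k\<in>K - zeros_within (2 * R). norm (inverse (\<phi> k))"
  obtain G where G: "G holomorphic_on UNIV" "G 0 = g 0" "\<And>w. g w = G w * (\<Prod>k\<in>K. 1 - w / \<phi> k)"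
      "\<And>w. norm w \<le> R \<Longrightarrow> G w \<noteq> 0" "\<And>w. norm w \<le> R \<Longrightarrow> norm (G w) \<le> norm (g 0) * exp B * exp (2 * R * ?s)"
    by (rule divide_zeros_bounded[OF _ K M], use R in simp, assumption, rule that)
  define A where "A = B + 2 * R * \<eta>"
  have "0 \<le> ?s"
    by (intro sum_nonneg) auto
  then have A: "A > 0" "A / R \<le> \<theta>"
    using B R tail \<theta>(1) by (auto simp: A_def add_divide_distrib intro: add_pos_nonneg)
  have "16 * A \<le> 16 * (R * \<theta>)"
    using A(2) R by (simp add: field_simps)
  also have "\<dots> \<le> R"
    using mult_left_mono[OF \<theta>(2), of R] R by simp
  finally have "16 * A \<le> R" .
  have "norm (G w - G 0) \<le> 12 * A / R * norm (G 0)" if "norm w \<le> 1" for w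
  proof (rule zero_free_norm_diff_center_le[OF _ _ R A(1) \<open>16 * A \<le> R\<close> _ that])
    show "G holomorphic_on ball 0 R"
      using G(1) by (rule holomorphic_on_subset) auto
    show "G u \<noteq> 0" if "u \<in> ball 0 R" for u
      using G(4) that by simp
    show "norm (G u) \<le> norm (G 0) * exp A" if "u \<in> ball 0 R" for u
    proof -
      have "norm (G u) \<le> norm (g 0) * exp B * exp (2 * R * ?s)"
        using G(5)[of u] that by simp
      also have "\<dots> \<le> norm (g 0) * exp B * exp (2 * R * \<eta>)"
        using tail R by (intro mult_left_mono) auto
      finally show ?thesis
        by (simp add: A_def G(2) exp_add mult.assoc)
    qed
  qed
  moreover have "12 * A / R * norm (g 0) \<le> 12 * \<theta> * norm (g 0)"
  proof -
    have "12 * A / R * norm (g 0) = A / R * (12 * norm (g 0))"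
      by simp
    also have "\<dots> \<le> \<theta> * (12 * norm (g 0))"
      using A(2) by (intro mult_right_mono) auto
    finally show ?thesis
      by (simp add: mult_ac)
  qed
  ultimately show ?thesis
    using that[OF G(1-3)] G(2) by fastforce
qed

lemma radius_with_small_tail:
  assumes \<sigma>: "\<sigma> < 1" and \<eta>: "\<eta> > 0"
  obtains R where "R \<ge> 4" "4 * R \<ge> R0" "((4 * R) powr \<sigma> + C) / R \<le> \<eta>"
    "\<And>J. finite J \<Longrightarrow> J \<subseteq> I \<Longrightarrow> J \<inter> zeros_within (2 * R) = {} \<Longrightarrow>
       (\<Sum>k\<in>J. norm (inverse (\<phi> k))) \<le> \<eta>"
proof -
  obtain T where T: "\<And>J. finite J \<Longrightarrow> J \<subseteq> I \<Longrightarrow> (\<Sum>k\<in>J. norm (inverse (\<phi> k))) \<le> T"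
    by (rule sum_inverse_zeros_bounded, rule that)
  obtain F where F: "finite F" "F \<subseteq> I"
      and tail: "\<And>J. finite J \<Longrightarrow> J \<subseteq> I \<Longrightarrow> J \<inter> F = {} \<Longrightarrow> (\<Sum>k\<in>J. norm (inverse (\<phi> k))) \<le> \<eta>"
  proof (rule bounded_sums_tail_le[where u = "\<lambda>k. norm (inverse (\<phi> k))" and I = I])
    show "(\<Sum>k\<in>J. norm (inverse (\<phi> k))) \<le> T" if "finite J" "J \<subseteq> I" for J
      using T that .
  qed (rule \<eta>, rule that)
  have "\<forall>\<^sub>F R in at_top. ((4 * R) powr \<sigma> + C) / R < \<eta>"
    using powr_add_const_div_tendsto_0[OF \<sigma>, of 4 C] \<eta> by (intro order_tendstoD(2)) auto
  then obtain M where M: "\<And>R. R \<ge> M \<Longrightarrow> ((4 * R) powr \<sigma> + C) / R < \<eta>"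
    by (auto simp: eventually_at_top_linorder)
  define R where "R = max (max M 4) (max R0 (\<Sum>k\<in>F. norm (\<phi> k)))"
  have R: "R \<ge> 4" "4 * R \<ge> R0" "R \<ge> (\<Sum>k\<in>F. norm (\<phi> k))" "((4 * R) powr \<sigma> + C) / R < \<eta>"
    using M[of R] by (auto simp: R_def)
  have F_within: "F \<subseteq> zeros_within (2 * R)"
    using F R(1,3) member_le_sum[of _ F "\<lambda>k. norm (\<phi> k)"] by (force simp: zeros_within_def)
  show ?thesis
  proof (rule that[OF R(1,2)])
    show "((4 * R) powr \<sigma> + C) / R \<le> \<eta>"
      using R(4) by simp
    show "(\<Sum>k\<in>J. norm (inverse (\<phi> k))) \<le> \<eta>"
      if "finite J" "J \<subseteq> I" "J \<inter> zeros_within (2 * R) = {}" for J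
      using that F_within by (intro tail) auto
  qed
qed

lemma eventually_factor_near_constant:
  assumes \<epsilon>: "\<epsilon> > 0"
  shows "\<forall>\<^sub>F N in sequentially. \<exists>G. G holomorphic_on UNIV \<and> G 0 = g 0 \<and>
    (\<forall>w. g w = G w * (\<Prod>k\<in>{k\<in>I. k < N}. 1 - w / \<phi> k)) \<and>
    (\<forall>w. norm w \<le> 1 \<longrightarrow> norm (G w - g 0) \<le> \<epsilon>)"
proof -
  define \<theta> where "\<theta> = min (1/16) (\<epsilon> / (12 * norm (g 0)))"
  have \<theta>: "\<theta> > 0" "\<theta> \<le> 1/16" "12 * \<theta> * norm (g 0) \<le> \<epsilon>"
    using \<epsilon> g_0_nonzero by (auto simp: \<theta>_def min_def field_simps)
  obtain \<sigma> C R0 where \<sigma>: "\<sigma> < 1" and C: "0 \<le> C"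
      and growth: "\<And>w. norm w \<ge> R0 \<Longrightarrow> norm (g w) \<le> norm (g 0) * exp (norm w powr \<sigma> + C)"
    by (rule g_growth, rule that)
  obtain R where R: "R \<ge> 4" "4 * R \<ge> R0" "((4 * R) powr \<sigma> + C) / R \<le> \<theta> / 4"
      and tail: "\<And>J. finite J \<Longrightarrow> J \<subseteq> I \<Longrightarrow> J \<inter> zeros_within (2 * R) = {} \<Longrightarrow>
        (\<Sum>k\<in>J. norm (inverse (\<phi> k))) \<le> \<theta> / 4"
  proof (rule radius_with_small_tail[OF \<sigma>])
    show "\<theta> / 4 > 0"
      using \<theta>(1) by simp
  qed (rule that)
  obtain N0 where N0: "zeros_within (2 * R) \<subseteq> {..<N0}"
    using finite_nat_bounded finite_zeros_within by blast
  show ?thesis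
    unfolding eventually_sequentially
  proof (intro exI[of _ N0] allI impI)
    fix N assume "N \<ge> N0"
    define K where "K = {k\<in>I. k < N}"
    have K: "finite K" "K \<subseteq> I" "zeros_within (2 * R) \<subseteq> K"
      using N0 \<open>N \<ge> N0\<close> by (auto simp: K_def zeros_within_def)
    obtain G where G: "G holomorphic_on UNIV" "G 0 = g 0" "\<And>w. g w = G w * (\<Prod>k\<in>K. 1 - w / \<phi> k)"
        "\<And>w. norm w \<le> 1 \<Longrightarrow> norm (G w - g 0) \<le> 12 * \<theta> * norm (g 0)"
    proof (rule factor_near_constant[OF R(1) K, where B = "(4 * R) powr \<sigma> + C" and \<eta> = "\<theta> / 4"])
      show "norm (g w) \<le> norm (g 0) * exp ((4 * R) powr \<sigma> + C)" if "norm w = 4 * R" for w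
        using growth[of w] that R(2) by simp
      show "(4 * R) powr \<sigma> + C > 0"
        using R(1) C by (simp add: add_pos_nonneg)
      show "(\<Sum>k\<in>K - zeros_within (2 * R). norm (inverse (\<phi> k))) \<le> \<theta> / 4"
        using K by (intro tail) auto
      show "((4 * R) powr \<sigma> + C) / R + 2 * (\<theta> / 4) \<le> \<theta>"
        using R(3) \<theta>(1) by linarith
    qed (rule \<theta>(2), rule that)
    then show "\<exists>G. G holomorphic_on UNIV \<and> G 0 = g 0 \<and>
        (\<forall>w. g w = G w * (\<Prod>k\<in>{k\<in>I. k < N}. 1 - w / \<phi> k)) \<and>
        (\<forall>w. norm w \<le> 1 \<longrightarrow> norm (G w - g 0) \<le> \<epsilon>)"
      using \<theta>(3) by (intro exI[of _ G]) (auto simp: K_def intro: order_trans)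
  qed
qed

lemma g_has_fps_expansion:
  assumes sums: "\<And>w. (\<lambda>k. a k * w ^ k) sums f w"
  shows "g has_fps_expansion Abs_fps (\<lambda>k. a k - (if k = 0 then f z else 0))"
proof (rule has_fps_expansionI, rule always_eventually, rule allI)
  fix u :: complex
  have "(\<lambda>k. if k = 0 then f z else 0) sums f z"
    using sums_single[of 0 "\<lambda>_. f z"] by simp
  then have "(\<lambda>k. (if k = 0 then f z else 0) * u ^ k) sums f z"
    by (rule back_subst[of "\<lambda>h. h sums _"]) (auto simp: fun_eq_iff)
  from sums_diff[OF sums this] show "(\<lambda>k. fps_nth (Abs_fps (\<lambda>k. a k - (if k = 0 then f z else 0))) k * u ^ k) sums g u"
    by (simp add: g_def algebra_simps)
qed

lemma coefficient_near_esym: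
  assumes sums: "\<And>w. (\<lambda>k. a k * w ^ k) sums f w" and n: "n \<ge> 1" and K: "finite K"
    and G: "G holomorphic_on UNIV" "G 0 = g 0" "\<And>w. g w = G w * (\<Prod>k\<in>K. 1 - w / \<phi> k)"
    and near: "\<And>w. norm w \<le> 1 \<Longrightarrow> norm (G w - g 0) \<le> \<epsilon>"
  shows "norm (a n - g 0 * ((-1) ^ n * esym K n (\<lambda>k. inverse (\<phi> k))))
    \<le> n * \<epsilon> * exp (\<Sum>k\<in>K. norm (inverse (\<phi> k)))"
proof -
  have "(\<lambda>w. G w * (\<Prod>k\<in>K. 1 - w / \<phi> k)) = g"
    using G(3) by auto
  then have "(\<lambda>w. G w * (\<Prod>k\<in>K. 1 - w / \<phi> k)) has_fps_expansion
      Abs_fps (\<lambda>k. a k - (if k = 0 then f z else 0))"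
    using g_has_fps_expansion[OF sums] by simp
  from fps_nth_mult_prod_approx[OF G(1) K _ this n] show ?thesis
    using near G(2) n by simp
qed

lemma coefficient_eq:
  assumes sums: "\<And>w. (\<lambda>k. a k * w ^ k) sums f w" and n: "n \<ge> 1"
  shows "a n = g 0 * ((-1) ^ n * (\<Sum>\<^sub>\<infinity>S\<in>{S. S \<subseteq> I \<and> card S = n}. \<Prod>k\<in>S. inverse (\<phi> k)))"
proof -
  obtain T where T: "\<And>J. finite J \<Longrightarrow> J \<subseteq> I \<Longrightarrow> (\<Sum>k\<in>J. norm (inverse (\<phi> k))) \<le> T"
    by (rule sum_inverse_zeros_bounded, rule that)
  define approx where "approx N = g 0 * ((-1) ^ n * esym {k\<in>I. k < N} n (\<lambda>k. inverse (\<phi> k)))" for N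
  have "approx \<longlonglongrightarrow> g 0 * ((-1) ^ n * (\<Sum>\<^sub>\<infinity>S\<in>{S. S \<subseteq> I \<and> card S = n}. \<Prod>k\<in>S. inverse (\<phi> k)))"
    unfolding approx_def using T n by (intro tendsto_intros esym_tendsto_infsum)
  moreover have "approx \<longlonglongrightarrow> a n"
  proof (rule tendstoI)
    fix r :: real
    assume r: "r > 0"
    define \<epsilon> where "\<epsilon> = r / (2 * (n * exp T + 1))"
    have D: "n * exp T + 1 > 0"
      by (simp add: add_nonneg_pos)
    have \<epsilon>: "\<epsilon> > 0"
      using r D by (simp add: \<epsilon>_def)
    have "n * \<epsilon> * exp T = r / 2 * (n * exp T / (n * exp T + 1))"
      by (simp add: \<epsilon>_def field_simps)
    also have "\<dots> < r"
      using r D by (simp add: field_simps add_pos_nonneg)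
    finally have \<epsilon>_small: "n * \<epsilon> * exp T < r" .
    show "\<forall>\<^sub>F N in sequentially. dist (approx N) (a n) < r"
      using eventually_factor_near_constant[OF \<epsilon>]
    proof eventually_elim
      case (elim N)
      then obtain G where G: "G holomorphic_on UNIV" "G 0 = g 0"
          "\<And>w. g w = G w * (\<Prod>k\<in>{k\<in>I. k < N}. 1 - w / \<phi> k)"
          "\<And>w. norm w \<le> 1 \<Longrightarrow> norm (G w - g 0) \<le> \<epsilon>"
        by blast
      have "norm (a n - approx N) \<le> n * \<epsilon> * exp (\<Sum>k\<in>{k\<in>I. k < N}. norm (inverse (\<phi> k)))"
        unfolding approx_def by (rule coefficient_near_esym[OF sums n _ G]) simp
      also have "\<dots> \<le> n * \<epsilon> * exp T"
        using T[of "{k\<in>I. k < N}"] \<epsilon> by (intro mult_left_mono) auto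
      finally show ?case
        using \<epsilon>_small by (simp add: dist_norm norm_minus_commute)
    qed
  qed
  ultimately show ?thesis
    using LIMSEQ_unique by blast
qed

end

theorem theorem17:
  fixes f :: "complex \<Rightarrow> complex" and a :: "nat \<Rightarrow> complex"
    and z :: complex and n :: nat and I :: "nat set" and \<phi> :: "nat \<Rightarrow> complex"
  assumes "f holomorphic_on UNIV"
    and "\<And>w. (\<lambda>k. a k * w ^ k) sums f w"
    and "entire_order f < 1"
    and "f z \<noteq> f 0"
    and "n \<ge> 1"
    and "zeros_enum f z I \<phi>"
  shows "(\<lambda>S. \<Prod>k\<in>S. inverse (\<phi> k)) summable_on {S. S \<subseteq> I \<and> card S = n}
    \<and> a n = (-1) ^ n * (f 0 - f z) *
        (\<Sum>\<^sub>\<infinity>S\<in>{S. S \<subseteq> I \<and> card S = n}. \<Prod>k\<in>S. inverse (\<phi> k))"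
proof -
  interpret entire_level_set f z I \<phi>
    using assms(1,3,4,6) by unfold_locales
  obtain T where "\<And>J. finite J \<Longrightarrow> J \<subseteq> I \<Longrightarrow> (\<Sum>k\<in>J. norm (inverse (\<phi> k))) \<le> T"
    by (rule sum_inverse_zeros_bounded, rule that)
  then have "(\<lambda>S. \<Prod>k\<in>S. inverse (\<phi> k)) summable_on {S. S \<subseteq> I \<and> card S = n}"
    using assms(5) by (rule summable_on_prod_card_eq)
  moreover have "a n = (-1) ^ n * (f 0 - f z) *
      (\<Sum>\<^sub>\<infinity>S\<in>{S. S \<subseteq> I \<and> card S = n}. \<Prod>k\<in>S. inverse (\<phi> k))"
    using coefficient_eq[OF assms(2,5)] by (simp add: g_def mult_ac)
  ultimately show ?thesis ..
qed

end
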